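(* Let $M=(E,\mathcal{L})$ be a matroid. Then its near finitarization $M^{\mathrm{nfin}}$ is a finitary matroid if and only if $M$ is nearly finitary.
   Context: Matroids (possibly infinite): $\emptyset$ independent; subsets of independent sets independent; if $B$ is maximal independent and $A$ non-maximal independent, then $A\cup\{b\}$ is independent for some $b\in B\setminus A$; for independent $A\subseteq X\subseteq E$ there is a maximal independent $S$ with $A\subseteq S\subseteq X$. Bases are maximal independent sets. The finitarization $M^{\mathrm{fin}}=(E,\mathcal{L}^{\mathrm{fin}})$ has $\mathcal{L}^{\mathrm{fin}}$ = sets all of whose finite subsets lie in $\mathcal{L}$. The near finitarization is $M^{\mathrm{nfin}}=(E,\mathcal{L}^{\mathrm{nfin}})$ with $\mathcal{L}^{\mathrm{nfin}}=\{F\in\mathcal{L}^{\mathrm{fin}}:\exists S\in\mathcal{L},\ S\subseteq F,\ |F\setminus S|<\infty\}$. A matroid is finitary if a set is independent iff all its finite subsets are independent. $M$ is nearly finitary if $F\setminus B$ is finite whenever a base $F$ of $M^{\mathrm{fin}}$ contains a base $B$ of $M$. *)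

theory Defs
  imports Main
begin

definition base_of :: "'a set set \<Rightarrow> 'a set \<Rightarrow> bool" where
  "base_of L B \<longleftrightarrow> B \<in> L \<and> (\<forall>B'\<in>L. B \<subseteq> B' \<longrightarrow> B' = B)"

definition maximal_in :: "'a set set \<Rightarrow> 'a set \<Rightarrow> 'a set \<Rightarrow> bool" where
  "maximal_in L X S \<longleftrightarrow> S \<in> L \<and> S \<subseteq> X \<and> (\<forall>S'\<in>L. S \<subseteq> S' \<and> S' \<subseteq> X \<longrightarrow> S' = S)"

definition matroid :: "'a set \<Rightarrow> 'a set set \<Rightarrow> bool" where
  "matroid E L \<longleftrightarrow>
     (\<forall>A\<in>L. A \<subseteq> E) \<and>
     {} \<in> L \<and>
     (\<forall>A B. A \<in> L \<and> B \<subseteq> A \<longrightarrow> B \<in> L) \<and>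
     (\<forall>A B. base_of L B \<and> A \<in> L \<and> \<not> base_of L A \<longrightarrow> (\<exists>b\<in>B - A. insert b A \<in> L)) \<and>
     (\<forall>A X. A \<in> L \<and> A \<subseteq> X \<and> X \<subseteq> E \<longrightarrow> (\<exists>S. A \<subseteq> S \<and> maximal_in L X S))"

definition finitarization :: "'a set \<Rightarrow> 'a set set \<Rightarrow> 'a set set" where
  "finitarization E L = {F. F \<subseteq> E \<and> (\<forall>G. G \<subseteq> F \<and> finite G \<longrightarrow> G \<in> L)}"

definition near_finitarization :: "'a set \<Rightarrow> 'a set set \<Rightarrow> 'a set set" where
  "near_finitarization E L =
     {F \<in> finitarization E L. \<exists>S\<in>L. S \<subseteq> F \<and> finite (F - S)}"

definition finitary :: "'a set \<Rightarrow> 'a set set \<Rightarrow> bool" where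
  "finitary E L \<longleftrightarrow> (\<forall>X. X \<subseteq> E \<longrightarrow> (X \<in> L \<longleftrightarrow> (\<forall>G. G \<subseteq> X \<and> finite G \<longrightarrow> G \<in> L)))"

definition nearly_finitary :: "'a set \<Rightarrow> 'a set set \<Rightarrow> bool" where
  "nearly_finitary E L \<longleftrightarrow>
     (\<forall>F B. base_of (finitarization E L) F \<and> base_of L B \<and> B \<subseteq> F \<longrightarrow> finite (F - B))"

end

theory Submission
  imports Defs
begin

text \<open>
  If \<open>M\<close> is nearly finitary, each independent set \<open>X\<close> of the finitarization extends to a base
  \<open>F\<close> of the finitarization; \<open>F\<close> contains a base \<open>B\<close> of \<open>M\<close> with \<open>F - B\<close> finite, so \<open>X\<close> is a
  finite extension of \<open>X \<inter> B\<close>. Hence the near finitarization is the finitarization, which is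
  always finitary and is a matroid: augmentation in it involves only finitely many elements at a
  time and reduces to closure arguments in finite restrictions of \<open>M\<close>.
  Conversely, if the near finitarization is finitary it contains every base \<open>F\<close> of the
  finitarization, so \<open>F\<close> is a finite extension of an independent set of \<open>M\<close>, and by the exchange
  property every base of \<open>M\<close> inside \<open>F\<close> has finite complement in \<open>F\<close>.
\<close>

lemma base_of_mem: "base_of K B \<Longrightarrow> B \<in> K"
  unfolding base_of_def by blast

lemma maximal_in_ground_iff_base_of:
  assumes "\<forall>A\<in>K. A \<subseteq> E"
  shows "maximal_in K E F \<longleftrightarrow> base_of K F"
  using assms unfolding maximal_in_def base_of_def by blast

lemma finite_subset_mem_finitarization:
  "A \<in> finitarization E L \<Longrightarrow> G \<subseteq> A \<Longrightarrow> finite G \<Longrightarrow> G \<in> L"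
  unfolding finitarization_def by blast

lemma finitarization_subset_ground: "A \<in> finitarization E L \<Longrightarrow> A \<subseteq> E"
  unfolding finitarization_def by blast

lemma finitarization_subset: "A \<in> finitarization E L \<Longrightarrow> B \<subseteq> A \<Longrightarrow> B \<in> finitarization E L"
  unfolding finitarization_def by blast

lemma finitary_finitarization: "finitary E (finitarization E L)"
  unfolding finitary_def finitarization_def by blast

lemma finitarization_extends_to_maximal_in:
  assumes A: "A \<in> finitarization E L" and AX: "A \<subseteq> X" and XE: "X \<subseteq> E"
  shows "\<exists>S. A \<subseteq> S \<and> maximal_in (finitarization E L) X S"
proof -
  let ?P = "finitarization E L"
  let ?A = "{S \<in> ?P. A \<subseteq> S \<and> S \<subseteq> X}"
  have "\<Union>C \<in> ?A" if C: "C \<noteq> {}" "subset.chain ?A C" for C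
  proof -
    have CA: "C \<subseteq> ?A" using C(2) unfolding subset.chain_def by blast
    have "G \<in> L" if G: "G \<subseteq> \<Union>C" "finite G" for G
    proof -
      obtain B where "B \<in> C" "G \<subseteq> B" using finite_subset_Union_chain[of G C ?A] G C by blast
      then show ?thesis using CA G(2) finite_subset_mem_finitarization by blast
    qed
    then have "\<Union>C \<in> ?P" using CA XE unfolding finitarization_def by blast
    then show ?thesis using C(1) CA by blast
  qed
  then obtain S where "S \<in> ?A" "\<forall>Y\<in>?A. S \<subseteq> Y \<longrightarrow> Y = S"
    using subset_Zorn_nonempty[of ?A] A AX by blast
  then have "A \<subseteq> S \<and> maximal_in ?P X S" unfolding maximal_in_def by blast
  then show ?thesis ..
qed

text \<open>For independent \<open>H\<close>, \<open>spans L H x\<close> says that \<open>x\<close> lies in the closure of \<open>H\<close>.\<close>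

definition spans :: "'a set set \<Rightarrow> 'a set \<Rightarrow> 'a \<Rightarrow> bool" where
  "spans L H x \<longleftrightarrow> x \<in> H \<or> insert x H \<notin> L"

context
  fixes E :: "'a set" and L :: "'a set set"
  assumes M: "matroid E L"
begin

lemma indep_subset_ground: "A \<in> L \<Longrightarrow> A \<subseteq> E"
  and empty_indep: "{} \<in> L"
  and indep_subset: "A \<in> L \<Longrightarrow> B \<subseteq> A \<Longrightarrow> B \<in> L"
  and indep_augment_from_base:
    "base_of L B \<Longrightarrow> A \<in> L \<Longrightarrow> \<not> base_of L A \<Longrightarrow> \<exists>b\<in>B - A. insert b A \<in> L"
  and indep_extends_to_maximal_in:
    "A \<in> L \<Longrightarrow> A \<subseteq> X \<Longrightarrow> X \<subseteq> E \<Longrightarrow> \<exists>S. A \<subseteq> S \<and> maximal_in L X S"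
  using M unfolding matroid_def by simp_all

lemma indep_extends_to_base:
  assumes "A \<in> L"
  shows "\<exists>B. base_of L B \<and> A \<subseteq> B"
proof -
  obtain B where "A \<subseteq> B" "maximal_in L E B"
    using indep_extends_to_maximal_in[OF assms indep_subset_ground[OF assms] order_refl] by blast
  then show ?thesis using maximal_in_ground_iff_base_of indep_subset_ground by blast
qed

lemma indep_extends_to_base_within:
  assumes A: "A \<in> L" and B: "base_of L B"
  shows "\<exists>S. base_of L S \<and> A \<subseteq> S \<and> S \<subseteq> A \<union> B"
proof -
  obtain S where S: "A \<subseteq> S" "maximal_in L (A \<union> B) S"
    using indep_extends_to_maximal_in[OF A, of "A \<union> B"]
      indep_subset_ground[OF A] indep_subset_ground[OF base_of_mem[OF B]] by blast
  have "base_of L S"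
  proof (rule ccontr)
    assume "\<not> base_of L S"
    moreover have "S \<in> L" using S(2) unfolding maximal_in_def by blast
    ultimately obtain b where "b \<in> B - S" "insert b S \<in> L"
      using indep_augment_from_base[OF B] by blast
    then show False using S(2) unfolding maximal_in_def by blast
  qed
  then show ?thesis using S unfolding maximal_in_def by blast
qed

lemma base_exchange:
  assumes B1: "base_of L B1" and B2: "base_of L B2" and x: "x \<in> B1 - B2"
  shows "\<exists>b\<in>B2 - B1. base_of L (insert b (B1 - {x}))"
proof -
  have B1L: "B1 \<in> L" using base_of_mem[OF B1] .
  have "B1 - {x} \<in> L" "\<not> base_of L (B1 - {x})"
    using indep_subset[OF B1L] B1L x unfolding base_of_def by blast+
  then obtain b where b: "b \<in> B2 - (B1 - {x})" "insert b (B1 - {x}) \<in> L"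
    using indep_augment_from_base[OF B2] by blast
  have bB1: "b \<notin> B1" using b x by blast
  have "base_of L (insert b (B1 - {x}))"
  proof (rule ccontr)
    assume "\<not> base_of L (insert b (B1 - {x}))"
    then obtain c where "c \<in> B1 - insert b (B1 - {x})" "insert c (insert b (B1 - {x})) \<in> L"
      using indep_augment_from_base[OF B1 b(2)] by blast
    moreover from this have "insert c (insert b (B1 - {x})) = insert b B1" using x by blast
    ultimately show False using B1 bB1 unfolding base_of_def by blast
  qed
  then show ?thesis using b bB1 by blast
qed

lemma base_diff_card:
  assumes "base_of L B1" "base_of L B2" "finite (B1 - B2)"
  shows "finite (B2 - B1) \<and> card (B2 - B1) = card (B1 - B2)"
  using assms
proof (induction "card (B1 - B2)" arbitrary: B1)
  case 0
  then have "B1 \<subseteq> B2" by auto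
  then show ?case using 0 unfolding base_of_def by blast
next
  case (Suc n)
  then obtain x where x: "x \<in> B1 - B2" by (metis card.empty ex_in_conv nat.distinct(1))
  obtain b where b: "b \<in> B2 - B1" "base_of L (insert b (B1 - {x}))"
    using base_exchange[OF Suc.prems(1,2) x] by blast
  let ?B = "insert b (B1 - {x})"
  have "?B - B2 = (B1 - B2) - {x}" using b by blast
  then have "finite (B2 - ?B) \<and> card (B2 - ?B) = n"
    using Suc.hyps(1)[OF _ b(2) Suc.prems(2)] Suc.hyps(2) Suc.prems(3) x by simp
  moreover have "B2 - B1 = insert b (B2 - ?B)" "b \<notin> B2 - ?B" using b x by blast+
  ultimately show ?case using Suc.hyps(2) by simp
qed

lemma finite_indep_augment:
  assumes I: "I \<in> L" "finite I" and J: "J \<in> L" "finite J" and card: "card I < card J"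
  shows "\<exists>x\<in>J - I. insert x I \<in> L"
proof (rule ccontr)
  assume no_aug: "\<not> ?thesis"
  obtain B where B: "base_of L B" "J \<subseteq> B" using indep_extends_to_base[OF J(1)] by blast
  obtain S where S: "base_of L S" "I \<subseteq> S" "S \<subseteq> I \<union> B"
    using indep_extends_to_base_within[OF I(1) B(1)] by blast
  have "x \<notin> S" if "x \<in> J - I" for x
  proof
    assume "x \<in> S"
    then have "insert x I \<in> L" using S(2) indep_subset[OF base_of_mem[OF S(1)]] by blast
    then show False using no_aug that by blast
  qed
  then have JI: "J - I \<subseteq> B - S" using B by blast
  have SI: "S - B \<subseteq> I - J" using S B by blast
  then have "finite (S - B)" using I(2) finite_subset by blast
  then have exch: "finite (B - S) \<and> card (B - S) = card (S - B)"
    using base_diff_card[OF S(1) B(1)] by blast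
  have "card (J - I) \<le> card (B - S)" using JI exch card_mono by blast
  also have "\<dots> = card (S - B)" using exch by simp
  also have "\<dots> \<le> card (I - J)" using SI card_mono I(2) by blast
  finally have "card (J - I) \<le> card (I - J)" .
  moreover have "card J = card (J \<inter> I) + card (J - I)" "card I = card (I \<inter> J) + card (I - J)"
    using card_Int_Diff[OF J(2)] card_Int_Diff[OF I(2)] .
  ultimately show False using card by (simp add: Int_commute)
qed

text \<open>A maximal independent \<open>J \<supseteq> G\<close> inside \<open>H \<union> G \<union> {e}\<close> misses \<open>e\<close> and, as \<open>H\<close> spans \<open>G\<close>,
  has at most \<open>card H\<close> elements; so if \<open>insert e H\<close> were independent it would augment \<open>J\<close>.\<close>

lemma spans_trans:
  assumes H: "finite H" "H \<in> L" and G: "finite G" "G \<in> L"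
    and G_spans: "spans L G e" and H_spans_G: "\<forall>g\<in>G. spans L H g"
  shows "spans L H e"
proof (rule ccontr)
  assume "\<not> spans L H e"
  then have eH: "e \<notin> H" and He: "insert e H \<in> L" unfolding spans_def by auto
  have "e \<notin> G" using H_spans_G \<open>\<not> spans L H e\<close> by blast
  then have Ge: "insert e G \<notin> L" using G_spans unfolding spans_def by blast
  let ?Y = "H \<union> G \<union> {e}"
  have "?Y \<subseteq> E" using indep_subset_ground H(2) G(2) He by blast
  then obtain J where J: "G \<subseteq> J" "maximal_in L ?Y J"
    using indep_extends_to_maximal_in[OF G(2), of ?Y] by blast
  have JL: "J \<in> L" and JY: "J \<subseteq> ?Y" using J unfolding maximal_in_def by auto
  have fJ: "finite J" using JY H(1) G(1) finite_subset by blast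
  have eJ: "e \<notin> J" using J(1) indep_subset[OF JL, of "insert e G"] Ge by blast
  have "card J \<le> card H"
  proof (rule ccontr)
    assume "\<not> card J \<le> card H"
    then obtain x where "x \<in> J - H" "insert x H \<in> L"
      using finite_indep_augment[OF H(2,1) JL fJ] by auto
    moreover from this have "x \<in> G" using JY eJ by blast
    ultimately show False using H_spans_G unfolding spans_def by blast
  qed
  then have "card J < card (insert e H)" using eH H(1) by simp
  then obtain x where "x \<in> insert e H - J" "insert x J \<in> L"
    using finite_indep_augment[OF JL fJ He] H(1) by auto
  then show False using J(2) JY unfolding maximal_in_def by blast
qed

lemma indep_mem_finitarization: "A \<in> L \<Longrightarrow> A \<in> finitarization E L"
  unfolding finitarization_def using indep_subset_ground[of A] indep_subset[of A] by blast

lemma indep_mem_near_finitarization: "A \<in> L \<Longrightarrow> A \<in> near_finitarization E L"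
  unfolding near_finitarization_def using indep_mem_finitarization[of A] by (auto intro!: bexI[of _ A])

lemma finitarization_insert_dependent_witness:
  assumes F: "F \<in> finitarization E L" and e: "e \<in> E" and eF: "insert e F \<notin> finitarization E L"
  shows "\<exists>G. G \<subseteq> F \<and> finite G \<and> G \<in> L \<and> insert e G \<notin> L"
proof -
  obtain K where K: "K \<subseteq> insert e F" "finite K" "K \<notin> L"
    using F e eF finitarization_subset_ground[OF F] unfolding finitarization_def by blast
  then have "K - {e} \<subseteq> F" "finite (K - {e})" "insert e (K - {e}) \<notin> L"
    using indep_subset[of "insert e (K - {e})" K] by auto
  then show ?thesis using finite_subset_mem_finitarization[OF F] by blast
qed

lemma finitarization_augment:
  assumes F: "base_of (finitarization E L) F"
    and A: "A \<in> finitarization E L" and nA: "\<not> base_of (finitarization E L) A"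
  shows "\<exists>f\<in>F - A. insert f A \<in> finitarization E L"
proof (rule ccontr)
  let ?P = "finitarization E L"
  assume no_aug: "\<not> ?thesis"
  have FP: "F \<in> ?P" using base_of_mem[OF F] .
  obtain A' e where A': "A' \<in> ?P" "A \<subseteq> A'" "e \<in> A' - A"
    using nA A unfolding base_of_def by blast
  have eA: "insert e A \<in> ?P" using finitarization_subset[OF A'(1)] A'(2,3) by blast
  have eE: "e \<in> E" using finitarization_subset_ground[OF A'(1)] A'(3) by blast
  have "e \<notin> F" using no_aug eA A'(3) by blast
  then have "insert e F \<notin> ?P" using F unfolding base_of_def by blast
  then obtain G where G: "G \<subseteq> F" "finite G" "G \<in> L" "insert e G \<notin> L"
    using finitarization_insert_dependent_witness[OF FP eE] by blast
  have "\<exists>K. K \<subseteq> A \<and> finite K \<and> K \<in> L \<and> insert f K \<notin> L" if f: "f \<in> F - A" for f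
  proof -
    have "f \<in> E" using finitarization_subset_ground[OF FP] f by blast
    moreover have "insert f A \<notin> ?P" using no_aug f by blast
    ultimately show ?thesis using finitarization_insert_dependent_witness[OF A] by blast
  qed
  then obtain h where h: "\<And>f. f \<in> F - A \<Longrightarrow> h f \<subseteq> A \<and> finite (h f) \<and> insert f (h f) \<notin> L"
    by metis
  \<comment> \<open>finitely many elements of \<open>A\<close> already span \<open>G\<close>, hence \<open>e\<close>\<close>
  define H where "H = (G \<inter> A) \<union> \<Union>(h ` (G - A))"
  have H: "finite H" "H \<subseteq> A" unfolding H_def using G h by auto
  have HL: "H \<in> L" using finite_subset_mem_finitarization[OF A H(2,1)] .
  have "spans L H g" if g: "g \<in> G" for g
  proof (cases "g \<in> A")
    case True then show ?thesis using g unfolding H_def spans_def by blast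
  next
    case False
    then have "insert g (h g) \<notin> L" "insert g (h g) \<subseteq> insert g H"
      using h g G(1) unfolding H_def by auto
    then show ?thesis using indep_subset[of "insert g H"] unfolding spans_def by blast
  qed
  moreover have "spans L G e" using G(4) unfolding spans_def by blast
  ultimately have "spans L H e" using spans_trans[OF H(1) HL G(2,3)] by blast
  moreover have "insert e H \<in> L"
    using finite_subset_mem_finitarization[OF eA, of "insert e H"] H by blast
  ultimately show False using H(2) A'(3) unfolding spans_def by blast
qed

lemma matroid_finitarization: "matroid E (finitarization E L)"
  unfolding matroid_def
proof (intro conjI allI impI ballI)
  show "{} \<in> finitarization E L" using indep_mem_finitarization[OF empty_indep] .
qed (auto dest: finitarization_subset_ground intro: finitarization_subset
    finitarization_augment finitarization_extends_to_maximal_in)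

text \<open>The closure of \<open>T\<close> contains \<open>F\<close> but not \<open>b\<close>.\<close>

lemma insert_indep_of_maximal_in:
  assumes T: "maximal_in L F T" and b: "insert b T \<in> L" "b \<notin> F"
    and G: "G \<subseteq> F" "G \<in> L"
  shows "insert b G \<in> L"
proof -
  have TF: "T \<subseteq> F" using T unfolding maximal_in_def by blast
  obtain B where B: "base_of L B" "insert b T \<subseteq> B" using indep_extends_to_base[OF b(1)] by blast
  have BL: "B \<in> L" using base_of_mem[OF B(1)] .
  obtain S where S: "base_of L S" "G \<subseteq> S" "S \<subseteq> G \<union> B"
    using indep_extends_to_base_within[OF G(2) B(1)] by blast
  have TS_B: "T \<union> (S - F) \<subseteq> B" using B(2) S(3) G(1) by blast
  \<comment> \<open>by maximality of \<open>T\<close>, a base between \<open>T \<union> (S - F)\<close> and \<open>S\<close> lies in \<open>B\<close>, so it is \<open>B\<close>\<close>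
  obtain S' where S': "base_of L S'" "T \<union> (S - F) \<subseteq> S'" "S' \<subseteq> T \<union> (S - F) \<union> S"
    using indep_extends_to_base_within[OF indep_subset[OF BL TS_B] S(1)] by blast
  have "S' \<inter> F \<in> L" using indep_subset[OF base_of_mem[OF S'(1)]] by blast
  moreover have "T \<subseteq> S' \<inter> F" using S'(2) TF by blast
  ultimately have "S' \<inter> F = T" using T unfolding maximal_in_def by blast
  then have S'_sub: "S' \<subseteq> T \<union> (S - F)" using S'(3) by blast
  then have "S' \<subseteq> B" using TS_B by blast
  then have "S' = B" using S'(1) BL unfolding base_of_def by blast
  then have "b \<in> S" using B(2) S'_sub b(2) TF by blast
  then show ?thesis using indep_subset[OF base_of_mem[OF S(1)]] S(2) by blast
qed

lemma finitarization_base_contains_base: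
  assumes F: "base_of (finitarization E L) F"
  shows "\<exists>B. base_of L B \<and> B \<subseteq> F"
proof -
  have FP: "F \<in> finitarization E L" using base_of_mem[OF F] .
  obtain T where T: "maximal_in L F T"
    using indep_extends_to_maximal_in[OF empty_indep _ finitarization_subset_ground[OF FP]] by blast
  have TL: "T \<in> L" and TF: "T \<subseteq> F" using T unfolding maximal_in_def by auto
  have "base_of L T"
  proof (rule ccontr)
    assume "\<not> base_of L T"
    moreover obtain B0 where "base_of L B0" using indep_extends_to_base[OF empty_indep] by blast
    ultimately obtain b where b: "b \<in> B0 - T" "insert b T \<in> L"
      using indep_augment_from_base[OF _ TL] by blast
    have bE: "b \<in> E" using indep_subset_ground[OF b(2)] by blast
    have bF: "b \<notin> F" using T b unfolding maximal_in_def by blast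
    then have "insert b F \<notin> finitarization E L" using F unfolding base_of_def by blast
    then obtain G where "G \<subseteq> F" "G \<in> L" "insert b G \<notin> L"
      using finitarization_insert_dependent_witness[OF FP bE] by blast
    then show False using insert_indep_of_maximal_in[OF T b(2) bF] by blast
  qed
  then show ?thesis using TF by blast
qed

lemma near_finitarization_eq_finitarization:
  assumes "nearly_finitary E L"
  shows "near_finitarization E L = finitarization E L"
proof
  show "finitarization E L \<subseteq> near_finitarization E L"
  proof
    fix X assume X: "X \<in> finitarization E L"
    obtain F where F: "X \<subseteq> F" "maximal_in (finitarization E L) E F"
      using finitarization_extends_to_maximal_in[OF X finitarization_subset_ground[OF X]] by blast
    have "\<forall>A\<in>finitarization E L. A \<subseteq> E" using finitarization_subset_ground by blast
    then have F_base: "base_of (finitarization E L) F"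
      using maximal_in_ground_iff_base_of F(2) by blast
    obtain B where B: "base_of L B" "B \<subseteq> F"
      using finitarization_base_contains_base[OF F_base] by blast
    have "finite (F - B)" using assms F_base B unfolding nearly_finitary_def by blast
    moreover have "X - B \<inter> X \<subseteq> F - B" using F(1) by blast
    ultimately have "finite (X - B \<inter> X)" by (rule finite_subset[rotated])
    moreover have "B \<inter> X \<in> L" using indep_subset[OF base_of_mem[OF B(1)]] by blast
    ultimately show "X \<in> near_finitarization E L"
      unfolding near_finitarization_def using X by blast
  qed
qed (auto simp: near_finitarization_def)

lemma nearly_finitary_if_finitary_near_finitarization:
  assumes "finitary E (near_finitarization E L)"
  shows "nearly_finitary E L"
  unfolding nearly_finitary_def
proof (intro allI impI)
  fix F B assume FB: "base_of (finitarization E L) F \<and> base_of L B \<and> B \<subseteq> F"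
  have FP: "F \<in> finitarization E L" using FB base_of_mem by blast
  have "F \<in> near_finitarization E L"
    using assms finitarization_subset_ground[OF FP] indep_mem_near_finitarization
      finite_subset_mem_finitarization[OF FP] unfolding finitary_def by blast
  then obtain S where S: "S \<in> L" "S \<subseteq> F" "finite (F - S)"
    unfolding near_finitarization_def by blast
  obtain B' where B': "base_of L B'" "S \<subseteq> B'" using indep_extends_to_base[OF S(1)] by blast
  have "finite (B - B')" using S B' FB finite_subset[of "B - B'" "F - S"] by blast
  then have "finite (B' - B)" using base_diff_card FB B'(1) by blast
  moreover have "F - B \<subseteq> (F - S) \<union> (B' - B)" using B' by blast
  ultimately show "finite (F - B)" using S(3) finite_subset by blast
qed

end

theorem theorem4p1p1:
  fixes E :: "'a set" and L :: "'a set set"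
  assumes "matroid E L"
  shows "(matroid E (near_finitarization E L) \<and> finitary E (near_finitarization E L))
           \<longleftrightarrow> nearly_finitary E L"
proof
  assume "matroid E (near_finitarization E L) \<and> finitary E (near_finitarization E L)"
  then show "nearly_finitary E L"
    using nearly_finitary_if_finitary_near_finitarization[OF assms] by blast
next
  assume "nearly_finitary E L"
  then show "matroid E (near_finitarization E L) \<and> finitary E (near_finitarization E L)"
    using near_finitarization_eq_finitarization[OF assms] matroid_finitarization[OF assms]
      finitary_finitarization by simp
qed

end
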